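(* For every positive integer $k$, as formal power series in $q$, $$\sum_{n\ge 1}\mathrm{spt}k_d(n)\,q^n=P_k(q)\,(-q;q)_\infty+(-1)^k (q;q)_{k-1},$$ where the polynomials $P_k(q)$ are defined by $P_1(q)=1$ and $P_k(q)=(q^{k-1}-1)P_{k-1}(q)+q^{k-1}$ for $k>1$.
   Context: For a partition $\pi$, $s(\pi)$ denotes its smallest part. $\mathrm{Spt}k_d(n)$ is the set of partitions $\pi$ of $n$ in which the smallest part $s(\pi)$ occurs exactly $k$ times and all remaining parts (those larger than $s(\pi)$) are pairwise distinct; $\mathrm{spt}k_d(n)=|\mathrm{Spt}k_d(n)|$. Notation: $(a;q)_0=1$, $(a;q)_n=\prod_{j=0}^{n-1}(1-aq^j)$, $(a;q)_\infty=\prod_{j\ge 0}(1-aq^j)$. *)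

theory Defs
  imports "HOL-Library.Multiset" "HOL-Computational_Algebra.Formal_Power_Series"
begin

definition Sptkd :: "nat \<Rightarrow> nat \<Rightarrow> nat multiset set" where
  "Sptkd k n = {p. (\<forall>x\<in>#p. 0 < x) \<and> sum_mset p = n \<and> p \<noteq> {#} \<and>
      count p (Min (set_mset p)) = k \<and>
      (\<forall>x\<in>#p. Min (set_mset p) < x \<longrightarrow> count p x = 1)}"

definition sptkd :: "nat \<Rightarrow> nat \<Rightarrow> nat" where
  "sptkd k n = card (Sptkd k n)"

definition qpoch :: "int fps \<Rightarrow> nat \<Rightarrow> int fps" where
  "qpoch a n = (\<Prod>j<n. 1 - a * fps_X ^ j)"

text \<open>(a;q)_infinity: limit of the finite products in the standard
  (X-adic) metric topology of formal power series.\<close>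
definition qpoch_inf :: "int fps \<Rightarrow> int fps" where
  "qpoch_inf a = lim (\<lambda>n. qpoch a n)"

fun Ppoly :: "nat \<Rightarrow> int fps" where
  "Ppoly 0 = 1"
| "Ppoly (Suc 0) = 1"
| "Ppoly (Suc (Suc k)) = (fps_X ^ (Suc k) - 1) * Ppoly (Suc k) + fps_X ^ (Suc k)"

end

theory Submission
  imports Defs
begin

(* Sort the partitions in Spt k_d(n) by their smallest part s. With all parts at most N, those with
   smallest part s have generating function q^(ks) (-q^(s+1);q)_(N-s), so their total F_k(N) agrees
   with the spt series up to q^N. Since (1 + q^s) (-q^(s+1);q)_(N-s) = (-q^s;q)_(N-s+1), adding the
   cases k and k+1 telescopes: F_k + F_(k+1) = q^k ((-q;q)_N + F_k - q^(kN)). From F_1 = (-q;q)_N - 1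
   this recurrence gives F_k = P_k (-q;q)_N + (-1)^k (q;q)_(k-1) modulo q^(N+1), which is exactly the
   recurrence of P_k; letting N grow yields the identity. *)

unbundle fps_syntax

lemma fps_X_power_dvd_iff:
  "fps_X ^ N dvd (f :: 'a :: comm_ring_1 fps) \<longleftrightarrow> (\<forall>j<N. f $ j = 0)"
proof
  assume "fps_X ^ N dvd f"
  then obtain g where "f = fps_X ^ N * g" by (elim dvdE)
  then show "\<forall>j<N. f $ j = 0" by (simp add: fps_X_power_mult_nth)
next
  assume vanish: "\<forall>j<N. f $ j = 0"
  show "fps_X ^ N dvd f"
  proof (cases "f = 0")
    case False
    then have "N \<le> subdegree f" using vanish by (meson not_le nth_subdegree_nonzero)
    then have "f = fps_shift N f * fps_X ^ N" by (rule fps_shift_times_fps_X_power[symmetric])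
    then show ?thesis by (metis dvd_triv_right)
  qed simp
qed

lemma qpoch_Suc: "qpoch a (Suc N) = qpoch a N - fps_X ^ N * (a * qpoch a N)"
  by (simp add: qpoch_def algebra_simps)

lemma nth_qpoch_stable:
  assumes "j < N" and "N \<le> M"
  shows "qpoch a M $ j = qpoch a N $ j"
  using assms(2)
proof (induction M rule: dec_induct)
  case (step M)
  then show ?case using assms(1) by (simp add: qpoch_Suc fps_X_power_mult_nth)
qed simp

lemma qpoch_tendsto: "qpoch a \<longlonglongrightarrow> Abs_fps (\<lambda>j. qpoch a (Suc j) $ j)"
proof (rule tendsto_fpsI)
  fix j
  show "eventually (\<lambda>M. qpoch a M $ j = Abs_fps (\<lambda>j. qpoch a (Suc j) $ j) $ j) sequentially"
    using eventually_ge_at_top[of "Suc j"] by eventually_elim (simp add: nth_qpoch_stable)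
qed

lemma nth_qpoch_inf: "j < N \<Longrightarrow> qpoch_inf a $ j = qpoch a N $ j"
  using limI[OF qpoch_tendsto] nth_qpoch_stable[of j "Suc j" N]
  by (simp add: qpoch_inf_def)

lemma qpoch_inf_congruent: "fps_X ^ N dvd qpoch_inf a - qpoch a N"
  by (simp add: fps_X_power_dvd_iff nth_qpoch_inf)

lemma fps_nth_X_power_mult_prod_one_plus_X_power:
  assumes "finite A"
  shows "(fps_X ^ m * (\<Prod>j\<in>A. 1 + fps_X ^ j) :: 'a :: comm_semiring_1 fps) $ n
           = of_nat (card {B. B \<subseteq> A \<and> m + \<Sum>B = n})"
  using assms
proof (induction A arbitrary: m rule: finite_induct)
  case empty
  have "{B. B \<subseteq> {} \<and> m + \<Sum>B = n} = (if m = n then {{}} else {})" by auto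
  then show ?case by simp
next
  case (insert a A)
  let ?S = "\<lambda>m. {B. B \<subseteq> A \<and> m + \<Sum>B = n}"
  have sum_insert: "\<Sum>(insert a B) = a + \<Sum>B" if "B \<subseteq> A" for B
    using that insert.hyps finite_subset by (metis subsetD sum.insert)
  have split: "{B. B \<subseteq> insert a A \<and> m + \<Sum>B = n} = ?S m \<union> insert a ` ?S (m + a)"
  proof (intro equalityI subsetI)
    fix B assume B: "B \<in> {B. B \<subseteq> insert a A \<and> m + \<Sum>B = n}"
    show "B \<in> ?S m \<union> insert a ` ?S (m + a)"
    proof (cases "a \<in> B")
      case True
      then have "B = insert a (B - {a})" and "B - {a} \<subseteq> A" using B by auto
      then show ?thesis using B sum_insert[of "B - {a}"] by (auto intro!: image_eqI[of _ _ "B - {a}"])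
    qed (use B in auto)
  qed (auto simp: sum_insert)
  have "inj_on (insert a) (?S (m + a))"
    using insert.hyps(2) by (intro inj_onI) (metis insert_ident subsetD mem_Collect_eq)
  moreover have "finite (?S m')" for m'
    using insert.hyps(1) by (simp add: finite_subset[of _ "Pow A"] subset_eq)
  moreover have "?S m \<inter> insert a ` ?S (m + a) = {}" using insert.hyps(2) by auto
  ultimately have "card {B. B \<subseteq> insert a A \<and> m + \<Sum>B = n} = card (?S m) + card (?S (m + a))"
    by (simp add: split card_Un_disjoint card_image)
  moreover have "fps_X ^ m * (\<Prod>j\<in>insert a A. 1 + fps_X ^ j)
      = fps_X ^ m * (\<Prod>j\<in>A. 1 + fps_X ^ j) + fps_X ^ (m + a) * (\<Prod>j\<in>A. 1 + fps_X ^ j :: 'a fps)"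
    using insert.hyps by (simp add: algebra_simps power_add)
  ultimately show ?case by (simp add: insert.IH)
qed

definition distinct_gf :: "nat \<Rightarrow> nat \<Rightarrow> int fps" where
  "distinct_gf s N = (\<Prod>j\<in>{s<..N}. 1 + fps_X ^ j)"

definition spt_trunc :: "nat \<Rightarrow> nat \<Rightarrow> int fps" where
  "spt_trunc k N = (\<Sum>s=1..N. fps_X ^ (k * s) * distinct_gf s N)"

lemma distinct_gf_Suc:
  assumes "s < N"
  shows "distinct_gf s N = (1 + fps_X ^ Suc s) * distinct_gf (Suc s) N"
proof -
  have "{s<..N} = insert (Suc s) {Suc s<..N}" using assms by auto
  then show ?thesis by (simp add: distinct_gf_def)
qed

lemma distinct_gf_self [simp]: "distinct_gf N N = 1"
  by (simp add: distinct_gf_def)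

lemma distinct_gf_0: "distinct_gf 0 N = qpoch (- fps_X) N"
proof -
  have "{0<..N} = Suc ` {..<N}" by (simp add: image_Suc_lessThan atLeastSucAtMost_greaterThanAtMost)
  then show ?thesis by (simp add: distinct_gf_def qpoch_def prod.reindex)
qed

lemma spt_trunc_eq_sum_lessThan:
  "spt_trunc k N = (\<Sum>t<N. fps_X ^ (k * Suc t) * distinct_gf (Suc t) N)"
  unfolding spt_trunc_def by (simp add: sum.atLeast1_atMost_eq)

lemma spt_trunc_add_Suc:
  "spt_trunc k N + spt_trunc (Suc k) N = fps_X ^ k * (distinct_gf 0 N + spt_trunc k N - fps_X ^ (k * N))"
proof -
  have "spt_trunc k N + spt_trunc (Suc k) N
      = (\<Sum>t<N. fps_X ^ (k * Suc t) * ((1 + fps_X ^ Suc t) * distinct_gf (Suc t) N))"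
    unfolding spt_trunc_eq_sum_lessThan sum.distrib[symmetric]
    by (intro sum.cong) (auto simp: algebra_simps power_add)
  also have "\<dots> = fps_X ^ k * (\<Sum>t<N. fps_X ^ (k * t) * distinct_gf t N)"
    by (simp add: sum_distrib_left distinct_gf_Suc power_add mult_ac)
  also have "(\<Sum>t<N. fps_X ^ (k * t) * distinct_gf t N)
      = (\<Sum>t<Suc N. fps_X ^ (k * t) * distinct_gf t N) - fps_X ^ (k * N)"
    by simp
  also have "(\<Sum>t<Suc N. fps_X ^ (k * t) * distinct_gf t N) = distinct_gf 0 N + spt_trunc k N"
    unfolding spt_trunc_eq_sum_lessThan by (subst sum.lessThan_Suc_shift) simp
  finally show ?thesis .
qed

lemma spt_trunc_congruent:
  assumes "1 \<le> k"
  shows "fps_X ^ Suc N dvd spt_trunc k N - (Ppoly k * distinct_gf 0 N + (-1) ^ k * qpoch fps_X (k - 1))"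
  using assms
proof (induction k rule: dec_induct)
  case base
  have "spt_trunc 1 N = distinct_gf 0 N - 1" using spt_trunc_add_Suc[of 0 N] by (simp add: algebra_simps)
  then show ?case by (simp add: qpoch_def)
next
  case (step k)
  then obtain m where k: "k = Suc m" by (cases k) auto
  have "spt_trunc (Suc k) N - (Ppoly (Suc k) * distinct_gf 0 N + (-1) ^ Suc k * qpoch fps_X (Suc k - 1))
      = (fps_X ^ k - 1) * (spt_trunc k N - (Ppoly k * distinct_gf 0 N + (-1) ^ k * qpoch fps_X (k - 1)))
        - fps_X ^ Suc N * fps_X ^ (m * Suc N)"
    using spt_trunc_add_Suc[of k N] k
    by (simp add: qpoch_def algebra_simps power_add)
  then show ?case using step.IH by simp
qed

lemma Sptkd_0: "Sptkd k 0 = {}"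
proof -
  have "p = {#}" if "\<forall>x\<in>#p. 0 < x" and "sum_mset p = 0" for p :: "nat multiset"
    using that by (metis less_irrefl multiset_nonemptyE sum_mset_0_iff)
  then show ?thesis unfolding Sptkd_def by blast
qed

lemma Sptkd_decompose:
  assumes "p \<in> Sptkd k n"
  shows "p = replicate_mset k (Min (set_mset p)) + mset_set (set_mset p - {Min (set_mset p)})"
proof (rule multiset_eqI)
  fix x
  let ?s = "Min (set_mset p)"
  have "?s \<in># p" and count_min: "count p ?s = k"
    and count_other: "\<forall>y\<in>#p. ?s < y \<longrightarrow> count p y = 1"
    using assms by (simp_all add: Sptkd_def)
  show "count p x = count (replicate_mset k ?s + mset_set (set_mset p - {?s})) x"
  proof (cases "x \<in># p")
    case True
    then have "?s \<le> x" by simp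
    then consider "x = ?s" | "?s < x" by linarith
    then show ?thesis using count_min count_other True by cases simp_all
  next
    case False
    moreover from False have "x \<noteq> ?s" using \<open>?s \<in># p\<close> by auto
    ultimately show ?thesis by (simp add: not_in_iff)
  qed
qed

(* A partition in Sptkd k n is encoded by its smallest part s and the set B of its larger parts. *)
definition spt_splits :: "nat \<Rightarrow> nat \<Rightarrow> nat \<Rightarrow> (nat \<times> nat set) set" where
  "spt_splits k N n = (SIGMA s:{1..N}. {B. B \<subseteq> {s<..N} \<and> k * s + \<Sum>B = n})"

lemma bij_betw_spt_splits_Sptkd:
  assumes k: "1 \<le> k" and n: "n \<le> N"
  shows "bij_betw (\<lambda>(s, B). replicate_mset k s + mset_set B) (spt_splits k N n) (Sptkd k n)"
proof (rule bij_betw_byWitness[where f' = "\<lambda>p. (Min (set_mset p), set_mset p - {Min (set_mset p)})"])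
  have parts: "set_mset (replicate_mset k s + mset_set B) = insert s B" "Min (insert s B) = s"
    if "B \<subseteq> {s<..N}" for s B
  proof -
    have "finite B" using that finite_subset by blast
    then show "set_mset (replicate_mset k s + mset_set B) = insert s B" "Min (insert s B) = s"
      using that k by (auto intro!: Min_insert2)
  qed
  show "\<forall>a\<in>spt_splits k N n. (\<lambda>p. (Min (set_mset p), set_mset p - {Min (set_mset p)}))
          ((\<lambda>(s, B). replicate_mset k s + mset_set B) a) = a"
    using parts by (fastforce simp: spt_splits_def)
  show "\<forall>p\<in>Sptkd k n. (\<lambda>(s, B). replicate_mset k s + mset_set B)
          ((\<lambda>p. (Min (set_mset p), set_mset p - {Min (set_mset p)})) p) = p"
    by (simp add: Sptkd_decompose[symmetric])
  show "(\<lambda>(s, B). replicate_mset k s + mset_set B) ` spt_splits k N n \<subseteq> Sptkd k n"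
  proof
    fix p assume "p \<in> (\<lambda>(s, B). replicate_mset k s + mset_set B) ` spt_splits k N n"
    then obtain s B where p: "p = replicate_mset k s + mset_set B" and s: "1 \<le> s"
      and B: "B \<subseteq> {s<..N}" and sum: "k * s + \<Sum>B = n"
      by (auto simp: spt_splits_def)
    have fin: "finite B" and notin: "s \<notin> B" using B finite_subset by auto
    have set_p: "set_mset p = insert s B" and min_p: "Min (set_mset p) = s"
      using parts[OF B] p by simp_all
    show "p \<in> Sptkd k n" unfolding Sptkd_def
    proof (intro CollectI conjI ballI impI)
      show "0 < x" if "x \<in># p" for x using that set_p B s by auto
      show "sum_mset p = n" using p fin sum by (simp add: sum_unfold_sum_mset[of "\<lambda>x. x"])
      show "p \<noteq> {#}" using set_p by auto
      show "count p (Min (set_mset p)) = k" using min_p p fin notin by simp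
      show "count p x = 1" if "x \<in># p" "Min (set_mset p) < x" for x
        using that min_p set_p p fin by auto
    qed
  qed
  show "(\<lambda>p. (Min (set_mset p), set_mset p - {Min (set_mset p)})) ` Sptkd k n \<subseteq> spt_splits k N n"
  proof clarify
    fix p assume p: "p \<in> Sptkd k n"
    let ?s = "Min (set_mset p)" and ?B = "set_mset p - {Min (set_mset p)}"
    have "n = sum_mset (replicate_mset k ?s + mset_set ?B)"
      using p arg_cong[OF Sptkd_decompose[OF p], of sum_mset] by (simp add: Sptkd_def)
    then have sum: "k * ?s + \<Sum>?B = n" by (simp add: sum_unfold_sum_mset[of "\<lambda>x. x"])
    have "0 < ?s" using p by (auto simp: Sptkd_def)
    moreover have "?s \<le> N" using sum k n by (metis le_add1 le_trans mult_le_mono1 mult_1)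
    moreover have "?B \<subseteq> {?s<..N}"
    proof
      fix x assume x: "x \<in> ?B"
      then have "?s < x" by (auto simp: le_neq_trans)
      moreover have "x \<le> N" using x sum n member_le_sum[of x ?B "\<lambda>x. x"] by auto
      ultimately show "x \<in> {?s<..N}" by simp
    qed
    ultimately show "(?s, ?B) \<in> spt_splits k N n"
      using sum by (simp add: spt_splits_def)
  qed
qed

lemma nth_spt_trunc:
  assumes "1 \<le> k" and "n \<le> N"
  shows "spt_trunc k N $ n = int (sptkd k n)"
proof -
  have "spt_trunc k N $ n = (\<Sum>s=1..N. int (card {B. B \<subseteq> {s<..N} \<and> k * s + \<Sum>B = n}))"
    by (simp add: spt_trunc_def fps_sum_nth distinct_gf_def fps_nth_X_power_mult_prod_one_plus_X_power)
  also have "\<dots> = int (card (spt_splits k N n))"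
    unfolding spt_splits_def by (subst card_SigmaI) (auto intro: finite_subset[of _ "Pow {_<..N}"])
  also have "card (spt_splits k N n) = sptkd k n"
    unfolding sptkd_def using assms by (rule bij_betw_same_card[OF bij_betw_spt_splits_Sptkd])
  finally show ?thesis .
qed

lemma spt_series_congruent:
  assumes "1 \<le> k"
  shows "fps_X ^ Suc N dvd Abs_fps (\<lambda>n. int (sptkd k n)) - spt_trunc k N"
  unfolding fps_X_power_dvd_iff using nth_spt_trunc[OF assms] by simp

lemma fps_eqI_X_power_dvd_diff:
  assumes "\<And>n. fps_X ^ Suc n dvd f - (g :: 'a :: comm_ring_1 fps)"
  shows "f = g"
proof (rule fps_ext)
  fix n
  have "(f - g) $ n = 0" using assms[of n] unfolding fps_X_power_dvd_iff by blast
  then show "f $ n = g $ n" by simp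
qed

theorem theorem1:
  fixes k :: nat
  assumes "1 \<le> k"
  shows "Abs_fps (\<lambda>n. if 1 \<le> n then int (sptkd k n) else 0)
         = Ppoly k * qpoch_inf (- fps_X) + (-1) ^ k * qpoch fps_X (k - 1)"
proof -
  let ?spt = "Abs_fps (\<lambda>n. int (sptkd k n))"
  let ?c = "(-1) ^ k * qpoch fps_X (k - 1)"
  have "Abs_fps (\<lambda>n. if 1 \<le> n then int (sptkd k n) else 0) = ?spt"
    by (rule fps_ext) (simp add: sptkd_def Sptkd_0 Suc_le_eq)
  also have "?spt = Ppoly k * qpoch_inf (- fps_X) + ?c"
  proof (rule fps_eqI_X_power_dvd_diff)
    fix n
    let ?N = "Suc n"
    have le: "fps_X ^ Suc n dvd fps_X ^ Suc ?N" by (simp add: le_imp_power_dvd)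
    have "fps_X ^ Suc n dvd (?spt - spt_trunc k ?N) + (spt_trunc k ?N - (Ppoly k * distinct_gf 0 ?N + ?c))
        - Ppoly k * (qpoch_inf (- fps_X) - qpoch (- fps_X) ?N)"
      by (rule dvd_diff[OF dvd_add dvd_mult[OF qpoch_inf_congruent]] dvd_trans[OF le]
          spt_series_congruent[OF assms] spt_trunc_congruent[OF assms])+
    also have "\<dots> = ?spt - (Ppoly k * qpoch_inf (- fps_X) + ?c)"
      by (simp add: distinct_gf_0 algebra_simps)
    finally show "fps_X ^ Suc n dvd ?spt - (Ppoly k * qpoch_inf (- fps_X) + ?c)" .
  qed
  finally show ?thesis .
qed

end
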